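(* For positive integers $a$ and $n$, $$M_n(a,1,1)=\sum_{k=0}^n\Psi_{n-1}(k,a,1,1).$$
   Context: All constant terms are taken with $\operatorname{CT}_x=\operatorname{CT}_{x_n}\cdots\operatorname{CT}_{x_1}$ (iterated constant-term extraction), where $(1-x_i)^{-b}$ and $x_i/(1-x_i)$ are expanded as power series in $x_i$, and for $i<j$, $(x_j-x_i)^{-c}=x_j^{-c}(1-x_i/x_j)^{-c}$ is expanded as a power series in $x_i/x_j$. $$M_n(a,b,c):=\operatorname{CT}_x\prod_{i=1}^n(1-x_i)^{-b}x_i^{-a+1}\prod_{1\le i<j\le n}(x_j-x_i)^{-c},$$ $$\Psi_n(k,a,b,c):=\operatorname{CT}_x[t^k]\prod_{i=1}^n(1-x_i)^{-b}x_i^{-a+1}\Big(1+t\frac{x_i}{1-x_i}\Big)\prod_{1\le i<j\le n}(x_j-x_i)^{-c},$$ with $[t^k]$ the coefficient of $t^k$; empty products equal $1$ (so $\Psi_0(k,\cdot)$ is $1$ for $k=0$ and $0$ otherwise). *)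

theory Defs
  imports Main
begin

text \<open>
  Monomials in the variables t, x_1, ..., x_n are represented by exponent vectors
  e :: nat => int, where e 0 is the exponent of t and e i (i >= 1) that of x_i.
  A (formal) series is given by its coefficient function (nat => int) => int.
  Each elementary factor of the products in M_n and Psi_n is expanded exactly as
  prescribed: (1-x_i)^(-b) as a power series in x_i, x_i/(1-x_i) as a power series
  in x_i, and for i<j, (x_j-x_i)^(-c) = x_j^(-c) (1-x_i/x_j)^(-c) as a power series
  in x_i/x_j.  All these lie in the iterated Laurent series field in which x_1 is
  the outermost variable, so the iterated constant term CT_{x_n}...CT_{x_1} of the
  product is the coefficient of x^0 of the product, i.e. the (finite) sum over all
  ways of choosing one monomial from each factor with product x^0.
\<close>

datatype fidx = Geo nat | Mon nat | Tfac nat | Vdm nat nat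

text \<open>coefficients of (1-x_i)^(-b) = sum_m binom(b+m-1,m) x_i^m\<close>
definition geo_coeff :: "nat \<Rightarrow> nat \<Rightarrow> (nat \<Rightarrow> int) \<Rightarrow> int" where
  "geo_coeff b i e =
     (if (\<forall>v. v \<noteq> i \<longrightarrow> e v = 0) \<and> e i \<ge> 0
      then int ((b + nat (e i) - 1) choose nat (e i)) else 0)"

definition mon_coeff :: "int \<Rightarrow> nat \<Rightarrow> (nat \<Rightarrow> int) \<Rightarrow> int" where
  "mon_coeff a i e = (if e = (\<lambda>v. if v = i then 1 - a else 0) then 1 else 0)"

text \<open>coefficients of 1 + t x_i/(1-x_i) = 1 + sum_{m>=1} t x_i^m\<close>
definition tfac_coeff :: "nat \<Rightarrow> (nat \<Rightarrow> int) \<Rightarrow> int" where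
  "tfac_coeff i e =
     (if e = (\<lambda>v. 0) then 1
      else if (\<forall>v. v \<noteq> 0 \<and> v \<noteq> i \<longrightarrow> e v = 0) \<and> e 0 = 1 \<and> e i \<ge> 1 then 1
      else 0)"

text \<open>coefficients of (x_j-x_i)^(-c) = sum_m binom(c+m-1,m) x_i^m x_j^(-c-m), for i<j\<close>
definition vdm_coeff :: "nat \<Rightarrow> nat \<Rightarrow> nat \<Rightarrow> (nat \<Rightarrow> int) \<Rightarrow> int" where
  "vdm_coeff c i j e =
     (if (\<forall>v. v \<noteq> i \<and> v \<noteq> j \<longrightarrow> e v = 0) \<and> e i \<ge> 0 \<and> e j = - int c - e i
      then int ((c + nat (e i) - 1) choose nat (e i)) else 0)"

fun fac :: "int \<Rightarrow> nat \<Rightarrow> nat \<Rightarrow> fidx \<Rightarrow> (nat \<Rightarrow> int) \<Rightarrow> int" where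
  "fac a b c (Geo i) = geo_coeff b i"
| "fac a b c (Mon i) = mon_coeff a i"
| "fac a b c (Tfac i) = tfac_coeff i"
| "fac a b c (Vdm i j) = vdm_coeff c i j"

definition coeff_prod :: "'i set \<Rightarrow> ('i \<Rightarrow> (nat \<Rightarrow> int) \<Rightarrow> int) \<Rightarrow> (nat \<Rightarrow> int) \<Rightarrow> int" where
  "coeff_prod I F e =
     (\<Sum>es \<in> {es. (\<forall>l\<in>I. F l (es l) \<noteq> 0) \<and> (\<forall>l. l \<notin> I \<longrightarrow> es l = (\<lambda>v. 0))
                 \<and> (\<forall>v. (\<Sum>l\<in>I. es l v) = e v)}.
        \<Prod>l\<in>I. F l (es l))"

definition M_factors :: "nat \<Rightarrow> fidx set" where
  "M_factors n = Geo ` {1..n} \<union> Mon ` {1..n} \<union> {Vdm i j |i j. 1 \<le> i \<and> i < j \<and> j \<le> n}"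

definition Psi_factors :: "nat \<Rightarrow> fidx set" where
  "Psi_factors n = M_factors n \<union> Tfac ` {1..n}"

definition M :: "nat \<Rightarrow> int \<Rightarrow> nat \<Rightarrow> nat \<Rightarrow> int" where
  "M n a b c = coeff_prod (M_factors n) (fac a b c) (\<lambda>v. 0)"

definition Psi :: "nat \<Rightarrow> nat \<Rightarrow> int \<Rightarrow> nat \<Rightarrow> nat \<Rightarrow> int" where
  "Psi n k a b c = coeff_prod (Psi_factors n) (fac a b c) (\<lambda>v. if v = 0 then int k else 0)"

end

theory Submission
  imports Defs
begin

text \<open>
  For b = c = 1 every coefficient of every factor is 0 or 1, so M and Psi count the ways of
  choosing one monomial from each factor with product x^0 (resp. t^k x^0).  Consider the factors
  of M_{p+1} that involve x_{p+1}: x_{p+1}^(1-a), 1/(1-x_{p+1}) and, for i <= p,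
  1/(x_{p+1}-x_i) = sum_m x_i^m x_{p+1}^(-1-m).  Whatever exponents m_i >= 0 are chosen in the
  latter, the exponent of x_{p+1} is balanced by exactly one term of 1/(1-x_{p+1}), namely the
  one of degree a - 1 + sum_i (1 + m_i) >= 0 (here a > 0 is used).  So taking the constant term
  in x_{p+1} turns the new factors into prod_{i<=p} 1/(1-x_i) = prod_{i<=p} (1 + x_i/(1-x_i)),
  the integrand of Psi_p at t = 1; concretely, x_i^m corresponds to the term t x_i^m of
  1 + t x_i/(1-x_i) if m > 0 and to 1 if m = 0.  Summing over the power of t gives the identity.
  The counts are finite because the degree with weights n+1-v on x_v is bounded below on every
  factor, and its total over a choice is fixed.
\<close>

lemma mem_M_factors_iff [simp]:
  "Geo i \<in> M_factors n \<longleftrightarrow> i \<in> {1..n}"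
  "Mon i \<in> M_factors n \<longleftrightarrow> i \<in> {1..n}"
  "Vdm i j \<in> M_factors n \<longleftrightarrow> 1 \<le> i \<and> i < j \<and> j \<le> n"
  "Tfac i \<notin> M_factors n"
  by (auto simp: M_factors_def)

lemma Psi_factors_eq: "Psi_factors n = M_factors n \<union> Tfac ` {1..n}"
  by (simp add: Psi_factors_def)

lemma M_factors_Suc:
  "M_factors (Suc p) = M_factors p \<union> {Geo (Suc p), Mon (Suc p)} \<union> (\<lambda>i. Vdm i (Suc p)) ` {1..p}"
proof (rule set_eqI)
  show "l \<in> M_factors (Suc p) \<longleftrightarrow> l \<in> M_factors p \<union> {Geo (Suc p), Mon (Suc p)} \<union> (\<lambda>i. Vdm i (Suc p)) ` {1..p}"
    for l by (cases l) auto
qed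

lemma M_factors_Suc_subset: "M_factors p \<subseteq> M_factors (Suc p)"
  by (auto simp: M_factors_Suc)

lemma finite_M_factors [simp]: "finite (M_factors n)"
  by (induction n) (simp_all add: M_factors_Suc, simp add: M_factors_def)

lemma finite_Psi_factors [simp]: "finite (Psi_factors n)"
  by (simp add: Psi_factors_eq)

lemma M_factors_SucE:
  assumes "l \<in> M_factors (Suc p)"
  obtains "l \<in> M_factors p" | "l = Geo (Suc p)" | "l = Mon (Suc p)"
    | i where "i \<in> {1..p}" "l = Vdm i (Suc p)"
  using assms unfolding M_factors_Suc by auto

lemma sum_M_factors_Suc:
  "(\<Sum>l\<in>M_factors (Suc p). f l) =
     (\<Sum>l\<in>M_factors p. f l) + f (Geo (Suc p)) + f (Mon (Suc p)) + (\<Sum>i=1..p. f (Vdm i (Suc p)))"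
proof -
  have "inj_on (\<lambda>i. Vdm i (Suc p)) {1..p}"
    by (auto simp: inj_on_def)
  moreover have "M_factors p \<inter> {Geo (Suc p), Mon (Suc p)} = {}"
    and "(M_factors p \<union> {Geo (Suc p), Mon (Suc p)}) \<inter> (\<lambda>i. Vdm i (Suc p)) ` {1..p} = {}"
    by auto
  ultimately show ?thesis
    unfolding M_factors_Suc by (simp add: sum.union_disjoint sum.reindex add_ac)
qed

lemma sum_Psi_factors:
  "(\<Sum>l\<in>Psi_factors p. f l) = (\<Sum>l\<in>M_factors p. f l) + (\<Sum>i=1..p. f (Tfac i))"
proof -
  have "inj_on Tfac {1..p}" "M_factors p \<inter> Tfac ` {1..p} = {}"
    by (auto simp: inj_on_def)
  then show ?thesis
    unfolding Psi_factors_eq by (simp add: sum.union_disjoint sum.reindex)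
qed

definition choices :: "'i set \<Rightarrow> ('i \<Rightarrow> (nat \<Rightarrow> int) \<Rightarrow> int) \<Rightarrow> (nat \<Rightarrow> int) \<Rightarrow> ('i \<Rightarrow> nat \<Rightarrow> int) set"
  where "choices I F e =
    {es. (\<forall>l\<in>I. F l (es l) \<noteq> 0) \<and> (\<forall>l. l \<notin> I \<longrightarrow> es l = (\<lambda>v. 0)) \<and> (\<forall>v. (\<Sum>l\<in>I. es l v) = e v)}"

lemma
  assumes "es \<in> choices I F e"
  shows choices_nonzero: "l \<in> I \<Longrightarrow> F l (es l) \<noteq> 0"
    and choices_outside: "l \<notin> I \<Longrightarrow> es l = (\<lambda>v. 0)"
    and choices_sum: "(\<Sum>l\<in>I. es l v) = e v"
  using assms by (auto simp: choices_def)

lemma coeff_prod_eq_card_choices: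
  assumes "\<And>l e. l \<in> I \<Longrightarrow> F l e \<noteq> 0 \<Longrightarrow> F l e = 1"
  shows "coeff_prod I F e = int (card (choices I F e))"
  unfolding coeff_prod_def choices_def[symmetric]
  by (simp add: assms choices_nonzero cong: prod.cong)

lemma choices_disjoint:
  assumes "e \<noteq> e'"
  shows "choices I F e \<inter> choices I F e' = {}"
  using assms by (auto simp: choices_def)

lemma fac_1_1_nonzero_eq_1: "fac a 1 1 l e \<noteq> 0 \<Longrightarrow> fac a 1 1 l e = 1"
  by (cases l) (auto simp: geo_coeff_def mon_coeff_def tfac_coeff_def vdm_coeff_def split: if_splits)

lemma M_eq_card_choices: "M n a 1 1 = int (card (choices (M_factors n) (fac a 1 1) (\<lambda>v. 0)))"
  unfolding M_def by (rule coeff_prod_eq_card_choices) (rule fac_1_1_nonzero_eq_1)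

lemma Psi_eq_card_choices:
  "Psi n k a 1 1 = int (card (choices (Psi_factors n) (fac a 1 1) (\<lambda>v. if v = 0 then int k else 0)))"
  unfolding Psi_def by (rule coeff_prod_eq_card_choices) (rule fac_1_1_nonzero_eq_1)

lemma M_factor_support:
  assumes "l \<in> M_factors n" "fac a b c l e \<noteq> 0" "v \<notin> {1..n}"
  shows "e v = 0"
  using assms by (cases l) (auto simp: geo_coeff_def mon_coeff_def vdm_coeff_def split: if_splits)

lemma sum_M_factors_outside:
  assumes "\<forall>l\<in>M_factors n. fac a b c l (es l) \<noteq> 0" "v \<notin> {1..n}"
  shows "(\<Sum>l\<in>M_factors n. es l v) = 0"
  using assms by (intro sum.neutral ballI M_factor_support[of _ n a b c]) auto

lemma geo_coeff_nonzeroE: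
  assumes "geo_coeff b i e \<noteq> 0"
  obtains m where "0 \<le> m" "e = (\<lambda>v. if v = i then m else 0)"
  using assms by (intro that[of "e i"]) (auto simp: geo_coeff_def split: if_splits)

lemma mon_coeff_nonzero_iff: "mon_coeff a i e \<noteq> 0 \<longleftrightarrow> e = (\<lambda>v. if v = i then 1 - a else 0)"
  by (simp add: mon_coeff_def)

lemma vdm_coeff_nonzeroE:
  assumes "vdm_coeff c i j e \<noteq> 0" "i \<noteq> j"
  obtains m where "0 \<le> m" "e = (\<lambda>v. if v = i then m else if v = j then - int c - m else 0)"
  using assms by (intro that[of "e i"]) (auto simp: vdm_coeff_def split: if_splits)

section \<open>Finiteness via a weighted degree\<close>

definition weighted_degree :: "(nat \<Rightarrow> int) \<Rightarrow> nat set \<Rightarrow> (nat \<Rightarrow> int) \<Rightarrow> int"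
  where "weighted_degree w V e = (\<Sum>v\<in>V. w v * e v)"

lemma weighted_degree_sum:
  "(\<Sum>l\<in>I. weighted_degree w V (es l)) = weighted_degree w V (\<lambda>v. \<Sum>l\<in>I. es l v)"
  unfolding weighted_degree_def sum_distrib_left by (rule sum.swap)

lemma finite_choices_if_degree_bounded:
  assumes "finite I"
    and bounded_below: "\<And>l e. l \<in> I \<Longrightarrow> F l e \<noteq> 0 \<Longrightarrow> - C \<le> weighted_degree w V e"
    and sublevel_finite: "\<And>l B. l \<in> I \<Longrightarrow> finite {e. F l e \<noteq> 0 \<and> weighted_degree w V e \<le> B}"
  shows "finite (choices I F e)"
proof -
  let ?deg = "weighted_degree w V"
  define S where "S = (\<Union>l\<in>I. {e'. F l e' \<noteq> 0 \<and> ?deg e' \<le> ?deg e + int (card I) * \<bar>C\<bar>})"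
  have "es l \<in> S" if es: "es \<in> choices I F e" and l: "l \<in> I" for es l
  proof -
    have "?deg e = (\<Sum>l'\<in>I. ?deg (es l'))"
      using es by (simp add: weighted_degree_sum choices_sum)
    also have "\<dots> = ?deg (es l) + (\<Sum>l'\<in>I - {l}. ?deg (es l'))"
      by (rule sum.remove[OF \<open>finite I\<close> l])
    finally have deg_e: "?deg e = ?deg (es l) + (\<Sum>l'\<in>I - {l}. ?deg (es l'))" .
    have "(\<Sum>l'\<in>I - {l}. - \<bar>C\<bar>) \<le> (\<Sum>l'\<in>I - {l}. ?deg (es l'))"
      using es bounded_below by (intro sum_mono) (force dest: choices_nonzero)
    moreover have "int (card (I - {l})) * \<bar>C\<bar> \<le> int (card I) * \<bar>C\<bar>"
      by (intro mult_right_mono) (simp_all add: card_mono \<open>finite I\<close>)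
    ultimately have "?deg (es l) \<le> ?deg e + int (card I) * \<bar>C\<bar>"
      using deg_e by simp
    then show ?thesis
      using es l by (auto simp: S_def choices_def)
  qed
  then have "choices I F e \<subseteq> {es. \<forall>l. (l \<in> I \<longrightarrow> es l \<in> S) \<and> (l \<notin> I \<longrightarrow> es l = (\<lambda>v. 0))}"
    by (auto simp: choices_def)
  moreover have "finite S"
    using \<open>finite I\<close> sublevel_finite by (simp add: S_def)
  then have "finite {es. \<forall>l. (l \<in> I \<longrightarrow> es l \<in> S) \<and> (l \<notin> I \<longrightarrow> es l = (\<lambda>v. 0))}"
    using \<open>finite I\<close> by (intro finite_set_of_finite_funs)
  ultimately show ?thesis
    by (rule finite_subset)
qed

lemma weighted_degree_single:
  "finite V \<Longrightarrow> i \<in> V \<Longrightarrow> weighted_degree w V (\<lambda>v. if v = i then m else 0) = w i * m"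
  by (simp add: weighted_degree_def if_distrib sum.delta_remove)

lemma weighted_degree_pair:
  "finite V \<Longrightarrow> i \<in> V \<Longrightarrow> j \<in> V \<Longrightarrow> i \<noteq> j \<Longrightarrow>
     weighted_degree w V (\<lambda>v. if v = i then m else if v = j then d else 0) = w i * m + w j * d"
  by (simp add: weighted_degree_def if_distrib sum.delta_remove)

text \<open>Decreasing weights make the degree of x_i^m x_j^(-c-m) (i < j) grow with m.\<close>

definition M_weight :: "nat \<Rightarrow> nat \<Rightarrow> int"
  where "M_weight n v = int n + 1 - int v"

lemma M_weight_bounds: "v \<in> {1..n} \<Longrightarrow> 1 \<le> M_weight n v" "v \<in> {1..n} \<Longrightarrow> M_weight n v \<le> int n"
  by (auto simp: M_weight_def)

lemma M_factor_degree_lower_bound: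
  assumes l: "l \<in> M_factors n" and nz: "fac a b c l e \<noteq> 0"
  shows "- (int n * (\<bar>1 - a\<bar> + int c)) \<le> weighted_degree (M_weight n) {1..n} e"
proof -
  let ?w = "M_weight n"
  have C: "- (int n * (\<bar>1 - a\<bar> + int c)) \<le> 0"
    "- (int n * (\<bar>1 - a\<bar> + int c)) \<le> - (int n * \<bar>1 - a\<bar>)"
    "- (int n * (\<bar>1 - a\<bar> + int c)) \<le> - (int n * int c)"
    using zero_le_mult_iff[of "int n" "\<bar>1 - a\<bar>"] zero_le_mult_iff[of "int n" "int c"]
    unfolding distrib_left by linarith+
  show ?thesis
  proof (cases l)
    case (Geo i)
    with l nz obtain m where i: "i \<in> {1..n}" and "0 \<le> m" "e = (\<lambda>v. if v = i then m else 0)"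
      by (auto elim: geo_coeff_nonzeroE)
    then have "0 \<le> weighted_degree ?w {1..n} e"
      using M_weight_bounds(1)[OF i] by (simp add: weighted_degree_single)
    then show ?thesis
      using C(1) by linarith
  next
    case (Mon i)
    with l nz have i: "i \<in> {1..n}" and e: "e = (\<lambda>v. if v = i then 1 - a else 0)"
      by (auto simp: mon_coeff_nonzero_iff)
    have "- (int n * \<bar>1 - a\<bar>) \<le> ?w i * - \<bar>1 - a\<bar>"
      using M_weight_bounds(2)[OF i] by (simp add: mult_right_mono)
    also have "\<dots> \<le> ?w i * (1 - a)"
      using M_weight_bounds(1)[OF i] by (intro mult_left_mono) simp_all
    also have "\<dots> = weighted_degree ?w {1..n} e"
      using i by (simp add: e weighted_degree_single)
    finally show ?thesis
      using C(2) by linarith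
  next
    case (Vdm i j)
    with l nz obtain m where ij: "i \<in> {1..n}" "j \<in> {1..n}" "i < j" and "0 \<le> m"
      and e: "e = (\<lambda>v. if v = i then m else if v = j then - int c - m else 0)"
      by (auto elim: vdm_coeff_nonzeroE)
    have "weighted_degree ?w {1..n} e = (?w i - ?w j) * m - int c * ?w j"
      using ij by (simp add: e weighted_degree_pair algebra_simps)
    moreover have "0 \<le> (?w i - ?w j) * m"
      using ij \<open>0 \<le> m\<close> by (simp add: M_weight_def)
    moreover have "int c * ?w j \<le> int n * int c"
      using M_weight_bounds(2)[OF ij(2)] by (simp add: mult.commute mult_left_mono)
    ultimately show ?thesis
      using C(3) by linarith
  qed (use l in simp)
qed

lemma finite_geo_coeff_sublevel:
  assumes i: "i \<in> {1..n}"
  shows "finite {e. geo_coeff b i e \<noteq> 0 \<and> weighted_degree (M_weight n) {1..n} e \<le> B}"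
proof (rule finite_subset)
  show "{e. geo_coeff b i e \<noteq> 0 \<and> weighted_degree (M_weight n) {1..n} e \<le> B}
      \<subseteq> (\<lambda>m v. if v = i then m else 0) ` {0..B}"
  proof
    fix e assume e: "e \<in> {e. geo_coeff b i e \<noteq> 0 \<and> weighted_degree (M_weight n) {1..n} e \<le> B}"
    then obtain m where "0 \<le> m" and e_eq: "e = (\<lambda>v. if v = i then m else 0)"
      by (auto elim: geo_coeff_nonzeroE)
    have "m \<le> M_weight n i * m"
      using M_weight_bounds(1)[OF i] \<open>0 \<le> m\<close> by (simp add: mult_le_cancel_right1)
    also have "\<dots> \<le> B"
      using e i by (simp add: e_eq weighted_degree_single)
    finally have "m \<in> {0..B}"
      using \<open>0 \<le> m\<close> by simp
    then show "e \<in> (\<lambda>m v. if v = i then m else 0) ` {0..B}"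
      using e_eq by (rule rev_image_eqI)
  qed
qed simp

lemma finite_vdm_coeff_sublevel:
  assumes ij: "i \<in> {1..n}" "j \<in> {1..n}" "i < j"
  shows "finite {e. vdm_coeff c i j e \<noteq> 0 \<and> weighted_degree (M_weight n) {1..n} e \<le> B}"
proof (rule finite_subset)
  let ?w = "M_weight n"
  show "{e. vdm_coeff c i j e \<noteq> 0 \<and> weighted_degree ?w {1..n} e \<le> B}
      \<subseteq> (\<lambda>m v. if v = i then m else if v = j then - int c - m else 0) ` {0..B + int c * int n}"
  proof
    fix e assume e: "e \<in> {e. vdm_coeff c i j e \<noteq> 0 \<and> weighted_degree ?w {1..n} e \<le> B}"
    then obtain m where "0 \<le> m" and e_eq: "e = (\<lambda>v. if v = i then m else if v = j then - int c - m else 0)"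
      using ij by (auto elim: vdm_coeff_nonzeroE)
    have "weighted_degree ?w {1..n} e = (?w i - ?w j) * m - int c * ?w j"
      using ij by (simp add: e_eq weighted_degree_pair algebra_simps)
    moreover have "m \<le> (?w i - ?w j) * m"
      using ij \<open>0 \<le> m\<close> by (simp add: M_weight_def mult_le_cancel_right1)
    moreover have "int c * ?w j \<le> int c * int n"
      using M_weight_bounds(2)[OF ij(2)] by (simp add: mult_left_mono)
    ultimately have "m \<in> {0..B + int c * int n}"
      using e \<open>0 \<le> m\<close> by auto
    then show "e \<in> (\<lambda>m v. if v = i then m else if v = j then - int c - m else 0) ` {0..B + int c * int n}"
      using e_eq by (rule rev_image_eqI)
  qed
qed simp

lemma finite_M_factor_sublevel:
  assumes "l \<in> M_factors n"
  shows "finite {e. fac a b c l e \<noteq> 0 \<and> weighted_degree (M_weight n) {1..n} e \<le> B}"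
proof (cases l)
  case (Geo i)
  then show ?thesis
    using assms finite_geo_coeff_sublevel[of i n b B] by simp
next
  case (Vdm i j)
  then show ?thesis
    using assms finite_vdm_coeff_sublevel[of i n j c B] by simp
qed (use assms in \<open>simp_all add: mon_coeff_nonzero_iff\<close>)

lemma finite_M_choices: "finite (choices (M_factors n) (fac a b c) e)"
  by (rule finite_choices_if_degree_bounded[OF finite_M_factors
        M_factor_degree_lower_bound finite_M_factor_sublevel])

section \<open>Eliminating the last variable\<close>

definition tfac_monomial :: "nat \<Rightarrow> int \<Rightarrow> nat \<Rightarrow> int"
  where "tfac_monomial i m = (if m = 0 then (\<lambda>v. 0) else (\<lambda>v. if v = 0 then 1 else if v = i then m else 0))"

definition vdm_monomial :: "nat \<Rightarrow> nat \<Rightarrow> int \<Rightarrow> nat \<Rightarrow> int"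
  where "vdm_monomial i j m = (\<lambda>v. if v = i then m else if v = j then - 1 - m else 0)"

lemma tfac_monomial_at [simp]: "i \<noteq> 0 \<Longrightarrow> tfac_monomial i m i = m"
  by (simp add: tfac_monomial_def)

lemma tfac_monomial_t_degree [simp]: "tfac_monomial i m 0 = (if m = 0 then 0 else 1)"
  by (simp add: tfac_monomial_def)

lemma vdm_monomial_at [simp]: "i \<noteq> j \<Longrightarrow> vdm_monomial i j m i = m"
  by (simp add: vdm_monomial_def)

lemma vdm_monomial_eq_tfac_monomial: "v \<noteq> 0 \<Longrightarrow> v \<noteq> j \<Longrightarrow> vdm_monomial i j m v = tfac_monomial i m v"
  by (simp add: vdm_monomial_def tfac_monomial_def)

lemma tfac_coeff_nonzero_iff:
  "i \<noteq> 0 \<Longrightarrow> tfac_coeff i e \<noteq> 0 \<longleftrightarrow> 0 \<le> e i \<and> e = tfac_monomial i (e i)"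
  by (auto simp: tfac_coeff_def tfac_monomial_def fun_eq_iff)

lemma vdm_coeff_one_nonzero_iff:
  "i \<noteq> j \<Longrightarrow> vdm_coeff 1 i j e \<noteq> 0 \<longleftrightarrow> 0 \<le> e i \<and> e = vdm_monomial i j (e i)"
  by (auto simp: vdm_coeff_def vdm_monomial_def fun_eq_iff)

text \<open>
  Psi_choice_of drops the factors containing x_{p+1} and records the term x_i^m x_{p+1}^(-1-m)
  of (x_{p+1} - x_i)^(-1) as the term t x_i^m (or 1, if m = 0) of 1 + t x_i/(1-x_i).
  M_choice_of inverts it; the term of (1-x_{p+1})^(-1) is the one that balances x_{p+1}.
\<close>

definition Psi_choice_of :: "nat \<Rightarrow> (fidx \<Rightarrow> nat \<Rightarrow> int) \<Rightarrow> fidx \<Rightarrow> nat \<Rightarrow> int"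
  where "Psi_choice_of p es l =
    (if l \<in> M_factors p then es l
     else case l of
       Tfac i \<Rightarrow> if i \<in> {1..p} then tfac_monomial i (es (Vdm i (Suc p)) i) else (\<lambda>v. 0)
     | _ \<Rightarrow> (\<lambda>v. 0))"

definition M_choice_of :: "int \<Rightarrow> nat \<Rightarrow> (fidx \<Rightarrow> nat \<Rightarrow> int) \<Rightarrow> fidx \<Rightarrow> nat \<Rightarrow> int"
  where "M_choice_of a p es l =
    (if l \<in> M_factors p then es l
     else if l = Geo (Suc p) then (\<lambda>v. if v = Suc p then a - 1 + (\<Sum>i=1..p. 1 + es (Tfac i) i) else 0)
     else if l = Mon (Suc p) then (\<lambda>v. if v = Suc p then 1 - a else 0)
     else case l of
       Vdm i j \<Rightarrow> if j = Suc p \<and> i \<in> {1..p} then vdm_monomial i j (es (Tfac i) i) else (\<lambda>v. 0)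
     | _ \<Rightarrow> (\<lambda>v. 0))"

lemma Psi_choice_of_outside: "l \<notin> Psi_factors p \<Longrightarrow> Psi_choice_of p es l = (\<lambda>v. 0)"
  by (auto simp: Psi_choice_of_def Psi_factors_eq split: fidx.split)

lemma M_choice_of_outside: "l \<notin> M_factors (Suc p) \<Longrightarrow> M_choice_of a p es l = (\<lambda>v. 0)"
  by (auto simp: M_choice_of_def M_factors_Suc split: fidx.split)

lemma M_choices_Suc_last_factors:
  assumes es: "es \<in> choices (M_factors (Suc p)) (fac a 1 1) (\<lambda>v. 0)"
  shows "es (Mon (Suc p)) = (\<lambda>v. if v = Suc p then 1 - a else 0)"
    and "i \<in> {1..p} \<Longrightarrow> 0 \<le> es (Vdm i (Suc p)) i \<and>
           es (Vdm i (Suc p)) = vdm_monomial i (Suc p) (es (Vdm i (Suc p)) i)"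
    and "es (Geo (Suc p)) =
           (\<lambda>v. if v = Suc p then a - 1 + (\<Sum>i=1..p. 1 + es (Vdm i (Suc p)) i) else 0)"
proof -
  have nz: "fac a 1 1 l (es l) \<noteq> 0" if "l \<in> M_factors (Suc p)" for l
    using es that by (rule choices_nonzero)
  show Mon: "es (Mon (Suc p)) = (\<lambda>v. if v = Suc p then 1 - a else 0)"
    using nz[of "Mon (Suc p)"] by (simp add: mon_coeff_nonzero_iff)
  show Vdm: "0 \<le> es (Vdm i (Suc p)) i \<and>
      es (Vdm i (Suc p)) = vdm_monomial i (Suc p) (es (Vdm i (Suc p)) i)" if "i \<in> {1..p}" for i
    using nz[of "Vdm i (Suc p)"] vdm_coeff_one_nonzero_iff[of i "Suc p"] that by simp
  obtain g where g: "es (Geo (Suc p)) = (\<lambda>v. if v = Suc p then g else 0)"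
    using nz[of "Geo (Suc p)"] by (auto elim: geo_coeff_nonzeroE)
  have old: "(\<Sum>l\<in>M_factors p. es l (Suc p)) = 0"
    using nz M_factors_Suc_subset by (intro sum_M_factors_outside) auto
  have "0 = (\<Sum>l\<in>M_factors (Suc p). es l (Suc p))"
    using es by (simp add: choices_sum)
  also have "\<dots> = g + (1 - a) - (\<Sum>i=1..p. 1 + es (Vdm i (Suc p)) i)"
  proof -
    have "es (Vdm i (Suc p)) (Suc p) = - (1 + es (Vdm i (Suc p)) i)" if "i \<in> {1..p}" for i
      using fun_cong[OF conjunct2[OF Vdm[OF that]], of "Suc p"] that by (simp add: vdm_monomial_def)
    then show ?thesis
      unfolding sum_M_factors_Suc old g Mon by (simp add: sum_subtractf sum.distrib)
  qed
  finally have g_val: "g = a - 1 + (\<Sum>i=1..p. 1 + es (Vdm i (Suc p)) i)"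
    by simp
  show "es (Geo (Suc p)) =
      (\<lambda>v. if v = Suc p then a - 1 + (\<Sum>i=1..p. 1 + es (Vdm i (Suc p)) i) else 0)"
    by (simp only: g g_val)
qed

lemma sum_Psi_choice_of:
  "(\<Sum>l\<in>Psi_factors p. Psi_choice_of p es l v) =
     (\<Sum>l\<in>M_factors p. es l v) + (\<Sum>i=1..p. tfac_monomial i (es (Vdm i (Suc p)) i) v)"
  unfolding sum_Psi_factors by (simp add: Psi_choice_of_def)

lemma Psi_choice_of_balanced:
  assumes es: "es \<in> choices (M_factors (Suc p)) (fac a 1 1) (\<lambda>v. 0)" and "v \<noteq> 0"
  shows "(\<Sum>l\<in>Psi_factors p. Psi_choice_of p es l v) = 0"
proof (cases "v = Suc p")
  case True
  have "(\<Sum>l\<in>M_factors p. es l v) = 0"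
    using True M_factors_Suc_subset choices_nonzero[OF es] by (intro sum_M_factors_outside) auto
  moreover have "(\<Sum>i=1..p. tfac_monomial i (es (Vdm i (Suc p)) i) v) = 0"
    using True by (intro sum.neutral) (simp add: tfac_monomial_def)
  ultimately show ?thesis
    by (simp add: sum_Psi_choice_of)
next
  case False
  have "0 = (\<Sum>l\<in>M_factors (Suc p). es l v)"
    using es by (simp add: choices_sum)
  also have "\<dots> = (\<Sum>l\<in>M_factors p. es l v) + (\<Sum>i=1..p. vdm_monomial i (Suc p) (es (Vdm i (Suc p)) i) v)"
    unfolding sum_M_factors_Suc M_choices_Suc_last_factors(1,3)[OF es] using False
    by (simp add: M_choices_Suc_last_factors(2)[OF es, THEN conjunct2, symmetric])
  also have "\<dots> = (\<Sum>l\<in>Psi_factors p. Psi_choice_of p es l v)"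
    unfolding sum_Psi_choice_of using False \<open>v \<noteq> 0\<close> by (simp add: vdm_monomial_eq_tfac_monomial)
  finally show ?thesis ..
qed

lemma Psi_choice_of_t_degree:
  assumes es: "es \<in> choices (M_factors (Suc p)) (fac a 1 1) (\<lambda>v. 0)"
  shows "\<exists>k\<le>p. (\<Sum>l\<in>Psi_factors p. Psi_choice_of p es l 0) = int k"
proof -
  let ?t_degree = "\<Sum>i=1..p. tfac_monomial i (es (Vdm i (Suc p)) i) 0"
  have "(\<Sum>l\<in>M_factors p. es l 0) = 0"
    using M_factors_Suc_subset choices_nonzero[OF es] by (intro sum_M_factors_outside) auto
  then have "(\<Sum>l\<in>Psi_factors p. Psi_choice_of p es l 0) = int (nat ?t_degree)"
    by (simp add: sum_Psi_choice_of sum_nonneg)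
  moreover have "?t_degree \<le> (\<Sum>i=1..p. 1)"
    by (intro sum_mono) simp
  ultimately show ?thesis
    by (intro exI[of _ "nat ?t_degree"]) simp
qed

lemma Psi_choice_of_mem:
  assumes es: "es \<in> choices (M_factors (Suc p)) (fac a 1 1) (\<lambda>v. 0)"
  shows "\<exists>k\<in>{0..Suc p}.
    Psi_choice_of p es \<in> choices (Psi_factors p) (fac a 1 1) (\<lambda>v. if v = 0 then int k else 0)"
proof -
  have "fac a 1 1 l (Psi_choice_of p es l) \<noteq> 0" if "l \<in> Psi_factors p" for l
  proof (cases "l \<in> M_factors p")
    case True
    then show ?thesis
      using choices_nonzero[OF es] M_factors_Suc_subset by (auto simp: Psi_choice_of_def)
  next
    case False
    with that obtain i where "i \<in> {1..p}" "l = Tfac i"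
      by (auto simp: Psi_factors_eq)
    then show ?thesis
      using M_choices_Suc_last_factors(2)[OF es] tfac_coeff_nonzero_iff[of i]
      by (simp add: Psi_choice_of_def)
  qed
  moreover obtain k where "k \<le> p" "(\<Sum>l\<in>Psi_factors p. Psi_choice_of p es l 0) = int k"
    using Psi_choice_of_t_degree[OF es] by blast
  ultimately show ?thesis
    using Psi_choice_of_outside Psi_choice_of_balanced[OF es]
    by (intro bexI[of _ k]) (auto simp: choices_def)
qed

lemma sum_M_choice_of:
  "(\<Sum>l\<in>M_factors (Suc p). M_choice_of a p es l v) =
     (\<Sum>l\<in>M_factors p. es l v)
     + (if v = Suc p then a - 1 + (\<Sum>i=1..p. 1 + es (Tfac i) i) + (1 - a) else 0)
     + (\<Sum>i=1..p. vdm_monomial i (Suc p) (es (Tfac i) i) v)"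
  unfolding sum_M_factors_Suc by (simp add: M_choice_of_def)

lemma Psi_choices_Tfac:
  assumes es: "es \<in> choices (Psi_factors p) (fac a 1 1) e" and "i \<in> {1..p}"
  shows "0 \<le> es (Tfac i) i \<and> es (Tfac i) = tfac_monomial i (es (Tfac i) i)"
proof -
  have "fac a 1 1 (Tfac i) (es (Tfac i)) \<noteq> 0"
    using \<open>i \<in> {1..p}\<close> by (intro choices_nonzero[OF es]) (simp add: Psi_factors_eq)
  then show ?thesis
    using tfac_coeff_nonzero_iff[of i] \<open>i \<in> {1..p}\<close> by simp
qed

lemma M_choice_of_balanced:
  assumes es: "es \<in> choices (Psi_factors p) (fac a 1 1) (\<lambda>v. if v = 0 then int k else 0)"
  shows "(\<Sum>l\<in>M_factors (Suc p). M_choice_of a p es l v) = 0"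
proof -
  let ?m = "\<lambda>i. es (Tfac i) i"
  have support: "(\<Sum>l\<in>M_factors p. es l v) = 0" if "v \<notin> {1..p}"
    using choices_nonzero[OF es] that by (intro sum_M_factors_outside) (auto simp: Psi_factors_eq)
  consider "v = 0" | "v = Suc p" | "v \<noteq> 0" "v \<noteq> Suc p"
    by blast
  then show ?thesis
  proof cases
    case 1
    have "(\<Sum>i=1..p. vdm_monomial i (Suc p) (?m i) v) = 0"
      using 1 by (intro sum.neutral) (simp add: vdm_monomial_def)
    then show ?thesis
      unfolding sum_M_choice_of using support 1 by simp
  next
    case 2
    have "(\<Sum>i=1..p. vdm_monomial i (Suc p) (?m i) v) = - (\<Sum>i=1..p. 1 + ?m i)"
      using 2 by (simp add: vdm_monomial_def sum_subtractf sum.distrib)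
    then show ?thesis
      unfolding sum_M_choice_of using support 2 by simp
  next
    case 3
    have "(\<Sum>l\<in>M_factors (Suc p). M_choice_of a p es l v)
        = (\<Sum>l\<in>M_factors p. es l v) + (\<Sum>i=1..p. es (Tfac i) v)"
      unfolding sum_M_choice_of using 3 Psi_choices_Tfac[OF es]
      by (simp add: vdm_monomial_eq_tfac_monomial)
    also have "\<dots> = (\<Sum>l\<in>Psi_factors p. es l v)"
      by (simp add: sum_Psi_factors)
    also have "\<dots> = 0"
      using es 3 by (simp add: choices_sum)
    finally show ?thesis .
  qed
qed

lemma M_choice_of_mem:
  assumes "0 < a" and es: "es \<in> choices (Psi_factors p) (fac a 1 1) (\<lambda>v. if v = 0 then int k else 0)"
  shows "M_choice_of a p es \<in> choices (M_factors (Suc p)) (fac a 1 1) (\<lambda>v. 0)"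
proof -
  have "fac a 1 1 l (M_choice_of a p es l) \<noteq> 0" if "l \<in> M_factors (Suc p)" for l
    using that
  proof (cases rule: M_factors_SucE)
    case 1
    then show ?thesis
      using choices_nonzero[OF es] by (simp add: M_choice_of_def Psi_factors_eq)
  next
    case 2
    have "0 \<le> a - 1 + (\<Sum>i=1..p. 1 + es (Tfac i) i)"
      using \<open>0 < a\<close> Psi_choices_Tfac[OF es] by (intro add_nonneg_nonneg sum_nonneg) auto
    with 2 show ?thesis
      by (simp add: M_choice_of_def geo_coeff_def)
  next
    case 3
    then show ?thesis
      by (simp add: M_choice_of_def mon_coeff_def)
  next
    case (4 i)
    then show ?thesis
      using Psi_choices_Tfac[OF es, of i] vdm_coeff_one_nonzero_iff[of i "Suc p"]
      by (simp add: M_choice_of_def)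
  qed
  then show ?thesis
    using M_choice_of_outside M_choice_of_balanced[OF es] by (simp add: choices_def)
qed

lemma M_choice_of_Psi_choice_of:
  assumes es: "es \<in> choices (M_factors (Suc p)) (fac a 1 1) (\<lambda>v. 0)"
  shows "M_choice_of a p (Psi_choice_of p es) = es"
proof
  fix l
  show "M_choice_of a p (Psi_choice_of p es) l = es l"
  proof (cases "l \<in> M_factors (Suc p)")
    case True
    then show ?thesis
    proof (cases rule: M_factors_SucE)
      case 2
      have "(\<Sum>i=1..p. 1 + Psi_choice_of p es (Tfac i) i) = (\<Sum>i=1..p. 1 + es (Vdm i (Suc p)) i)"
        by (intro sum.cong) (simp_all add: Psi_choice_of_def)
      then show ?thesis
        unfolding 2 M_choices_Suc_last_factors(3)[OF es] by (simp add: M_choice_of_def cong: if_cong)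
    next
      case 3
      then show ?thesis
        using M_choices_Suc_last_factors(1)[OF es] by (simp add: M_choice_of_def)
    next
      case (4 i)
      then show ?thesis
        using M_choices_Suc_last_factors(2)[OF es, of i] by (simp add: M_choice_of_def Psi_choice_of_def)
    qed (simp add: M_choice_of_def Psi_choice_of_def)
  next
    case False
    then show ?thesis
      using es by (simp add: M_choice_of_outside choices_outside)
  qed
qed

lemma Psi_choice_of_M_choice_of:
  assumes es: "es \<in> choices (Psi_factors p) (fac a 1 1) (\<lambda>v. if v = 0 then int k else 0)"
  shows "Psi_choice_of p (M_choice_of a p es) = es"
proof
  fix l
  show "Psi_choice_of p (M_choice_of a p es) l = es l"
  proof (cases "l \<in> Psi_factors p")
    case True
    then consider "l \<in> M_factors p" | i where "i \<in> {1..p}" "l = Tfac i"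
      by (auto simp: Psi_factors_eq)
    then show ?thesis
    proof cases
      case 1
      then show ?thesis
        by (simp add: M_choice_of_def Psi_choice_of_def)
    next
      case 2
      then show ?thesis
        using Psi_choices_Tfac[OF es, of i] by (simp add: M_choice_of_def Psi_choice_of_def)
    qed
  next
    case False
    then show ?thesis
      using es by (simp add: Psi_choice_of_outside choices_outside)
  qed
qed

lemma bij_betw_Psi_choice_of:
  assumes "0 < a"
  shows "bij_betw (Psi_choice_of p) (choices (M_factors (Suc p)) (fac a 1 1) (\<lambda>v. 0))
    (\<Union>k\<in>{0..Suc p}. choices (Psi_factors p) (fac a 1 1) (\<lambda>v. if v = 0 then int k else 0))"
    (is "bij_betw _ ?M_choices ?Psi_choices")
proof (rule bij_betw_byWitness[where f' = "M_choice_of a p"])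
  show "\<forall>es\<in>?M_choices. M_choice_of a p (Psi_choice_of p es) = es"
    using M_choice_of_Psi_choice_of by blast
  show "\<forall>es\<in>?Psi_choices. Psi_choice_of p (M_choice_of a p es) = es"
    using Psi_choice_of_M_choice_of by blast
  show "Psi_choice_of p ` ?M_choices \<subseteq> ?Psi_choices"
    using Psi_choice_of_mem by blast
  show "M_choice_of a p ` ?Psi_choices \<subseteq> ?M_choices"
    using M_choice_of_mem[OF assms] by blast
qed

lemma card_M_choices_Suc:
  assumes "0 < a"
  shows "card (choices (M_factors (Suc p)) (fac a 1 1) (\<lambda>v. 0)) =
    (\<Sum>k=0..Suc p. card (choices (Psi_factors p) (fac a 1 1) (\<lambda>v. if v = 0 then int k else 0)))"
    (is "card ?M_choices = (\<Sum>k=0..Suc p. card (?Psi_choices k))")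
proof -
  have bij: "bij_betw (Psi_choice_of p) ?M_choices (\<Union>k\<in>{0..Suc p}. ?Psi_choices k)"
    using assms by (rule bij_betw_Psi_choice_of)
  have "finite (\<Union>k\<in>{0..Suc p}. ?Psi_choices k)"
    using bij_betw_finite[OF bij] finite_M_choices by blast
  then have "card (\<Union>k\<in>{0..Suc p}. ?Psi_choices k) = (\<Sum>k=0..Suc p. card (?Psi_choices k))"
    by (intro card_UN_disjoint ballI impI choices_disjoint) (auto dest: fun_cong[where x = 0])
  with bij_betw_same_card[OF bij] show ?thesis
    by simp
qed

theorem corollary5p9:
  fixes a :: int and n :: nat
  assumes "0 < a" and "0 < n"
  shows "M n a 1 1 = (\<Sum>k = 0..n. Psi (n - 1) k a 1 1)"
proof -
  obtain p where n: "n = Suc p"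
    using assms(2) gr0_implies_Suc by blast
  show ?thesis
    unfolding n M_eq_card_choices Psi_eq_card_choices card_M_choices_Suc[OF assms(1)] by simp
qed

end
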